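(* Let $\mathcal{C}$ be a family of grounded curves (not necessarily $x$-monotone), where each curve $\gamma\in\mathcal{C}$ has a designated endpoint $p(\gamma)$ on the line $\{x=0\}$ and these endpoints have pairwise distinct $y$-coordinates. Let $G$ be the intersection graph of $\mathcal{C}$, and let $<$ be the total ordering of $\mathcal{C}$ according to the $y$-coordinates of the endpoints $p(\gamma)$. Then: (1) $G_<$ does not contain $M_1$ as an induced ordered subgraph; (2) if, in addition, all members of $\mathcal{C}$ are $x$-monotone, then the complement $\overline{G}_<$ (with the same ordering) does not contain the monotone path $P_4$ as an induced ordered subgraph.
   Context: A curve is the image of a continuous map $\phi:[0,1]\to\mathbb{R}^2$; it is $x$-monotone if every vertical line meets it in at most one point. A curve is grounded if one of its endpoints lies on $\{x=0\}$ and the whole curve lies in $\{x\ge0\}$. The intersection graph has the curves as vertices, adjacent iff they intersect. An ordered graph is a graph with a total order on its vertices; $H_{<'}$ is an induced ordered subgraph of $G_<$ if there is an order-preserving injection $\phi:V(H)\to V(G)$ with $uv\in E(H)\iff \phi(u)\phi(v)\in E(G)$. $M_1$ is the ordered graph on $1<2<3<4$ with edges $\{1,3\}$ and $\{2,4\}$ only. $P_4$ is the ordered graph on $v_1<v_2<v_3<v_4$ with edges $v_1v_2,v_2v_3,v_3v_4$ only. *)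

theory Defs
  imports "HOL-Analysis.Analysis"
begin

text \<open>The designated endpoint
  p(gamma) is taken to be pathstart g (no loss of generality: reversing the
  parametrisation does not change the image).\<close>

definition grounded_at_start :: "(real \<Rightarrow> real \<times> real) \<Rightarrow> bool" where
  "grounded_at_start g \<longleftrightarrow> path g \<and> fst (pathstart g) = 0 \<and>
     (\<forall>q\<in>path_image g. fst q \<ge> 0)"

definition x_monotone :: "(real \<Rightarrow> real \<times> real) \<Rightarrow> bool" where
  "x_monotone g \<longleftrightarrow> (\<forall>p\<in>path_image g. \<forall>q\<in>path_image g. fst p = fst q \<longrightarrow> p = q)"

definition contains_induced_ordered ::
  "nat \<Rightarrow> (nat \<Rightarrow> nat \<Rightarrow> bool) \<Rightarrow> 'a set \<Rightarrow> ('a \<Rightarrow> 'a \<Rightarrow> bool) \<Rightarrow> ('a \<Rightarrow> 'a \<Rightarrow> bool) \<Rightarrow> bool" where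
  "contains_induced_ordered n H V lt E \<longleftrightarrow>
     (\<exists>\<phi>. (\<forall>i<n. \<phi> i \<in> V) \<and> (\<forall>i<n. \<forall>j<n. i < j \<longrightarrow> lt (\<phi> i) (\<phi> j)) \<and>
          (\<forall>i<n. \<forall>j<n. i \<noteq> j \<longrightarrow> (H i j \<longleftrightarrow> E (\<phi> i) (\<phi> j))))"

text \<open>M_1 on vertices 0<1<2<3 (paper's 1<2<3<4): edges {1,3},{2,4}.\<close>
definition M1_edge :: "nat \<Rightarrow> nat \<Rightarrow> bool" where
  "M1_edge i j \<longleftrightarrow> {i, j} = {0, 2} \<or> {i, j} = {1, 3}"

definition P4_edge :: "nat \<Rightarrow> nat \<Rightarrow> bool" where
  "P4_edge i j \<longleftrightarrow> i = j + 1 \<or> j = i + 1"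

definition int_graph :: "('i \<Rightarrow> real \<Rightarrow> real \<times> real) \<Rightarrow> 'i \<Rightarrow> 'i \<Rightarrow> bool" where
  "int_graph g a b \<longleftrightarrow> a \<noteq> b \<and> path_image (g a) \<inter> path_image (g b) \<noteq> {}"

definition co_int_graph :: "('i \<Rightarrow> real \<Rightarrow> real \<times> real) \<Rightarrow> 'i \<Rightarrow> 'i \<Rightarrow> bool" where
  "co_int_graph g a b \<longleftrightarrow> a \<noteq> b \<and> path_image (g a) \<inter> path_image (g b) = {}"

definition end_order :: "('i \<Rightarrow> real \<Rightarrow> real \<times> real) \<Rightarrow> 'i \<Rightarrow> 'i \<Rightarrow> bool" where
  "end_order g a b \<longleftrightarrow> snd (pathstart (g a)) < snd (pathstart (g b))"

end

theory Submission
  imports Defs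
begin

text \<open>Both parts rest on Fashoda's interlacing theorem: two paths in the half-plane
  \<open>x \<ge> 0\<close> whose endpoints lie on the line \<open>x = 0\<close> in interlaced order must meet.
  For (1), joining \<open>a\<close> to \<open>c\<close> and \<open>b\<close> to \<open>d\<close> through their intersection points gives two
  such paths, so some curve of \<open>{a, c}\<close> meets some curve of \<open>{b, d}\<close>.
  For (2), the same theorem shows that of two disjoint \<open>x\<close>-monotone grounded curves the
  one grounded lower stays below the other on every common vertical line; a path
  \<open>0-1-2-3\<close> of disjoint pairs in which \<open>0\<close> meets \<open>2\<close> and \<open>1\<close> meets \<open>3\<close> then leads to a
  point that lies both above and below a curve on the same vertical line.\<close>

text \<open>The library's Fashoda theorem places the endpoints on the lower edge of a box, so
  the axis \<open>x = 0\<close> is moved there by swapping coordinates.\<close>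

definition yx_vector :: "real \<times> real \<Rightarrow> real^2" where
  "yx_vector p = vector [snd p, fst p]"

lemma yx_vector_nth [simp]: "yx_vector p $ 1 = snd p" "yx_vector p $ 2 = fst p"
  by (simp_all add: yx_vector_def)

lemma yx_vector_inject: "yx_vector p = yx_vector q \<longleftrightarrow> p = q"
  by (metis yx_vector_nth prod_eq_iff)

lemma bounded_linear_yx_vector: "bounded_linear yx_vector"
proof -
  have "linear yx_vector"
    by (rule linearI) (simp_all add: vec_eq_iff yx_vector_def forall_2)
  then show ?thesis
    by (simp add: linear_conv_bounded_linear)
qed

lemma half_plane_interlaced_paths_meet:
  fixes f g :: "real \<Rightarrow> real \<times> real"
  assumes "path f" "path g"
    and half_plane: "path_image f \<union> path_image g \<subseteq> {p. 0 \<le> fst p}"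
    and "fst (pathstart f) = 0" "fst (pathfinish f) = 0"
    and "fst (pathstart g) = 0" "fst (pathfinish g) = 0"
    and "snd (pathstart f) < snd (pathstart g)"
    and "snd (pathstart g) < snd (pathfinish f)"
    and "snd (pathfinish f) < snd (pathfinish g)"
  shows "path_image f \<inter> path_image g \<noteq> {}"
proof -
  let ?S = "path_image f \<union> path_image g"
  have "bounded (yx_vector ` ?S)"
    using assms(1,2) bounded_linear_yx_vector
    by (intro bounded_linear_image bounded_Un[THEN iffD2]) (auto intro: bounded_path_image)
  then obtain c where c: "yx_vector ` ?S \<subseteq> cbox (-c) c"
    by (rule bounded_subset_cbox_symmetric)
  define a :: "real^2" where "a = vector [- c $ 1, 0]"
  have box: "yx_vector ` ?S \<subseteq> cbox a c"
  proof
    fix z assume "z \<in> yx_vector ` ?S"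
    then obtain p where p: "p \<in> ?S" "z = yx_vector p" by blast
    then have "z \<in> cbox (-c) c" "0 \<le> fst p"
      using c half_plane by auto
    with p(2) show "z \<in> cbox a c"
      by (simp add: mem_box_cart forall_2 a_def)
  qed
  have paths: "path (yx_vector \<circ> f)" "path (yx_vector \<circ> g)"
    using assms(1,2) bounded_linear_yx_vector
    by (auto intro!: path_continuous_image linear_continuous_on)
  obtain z where "z \<in> path_image (yx_vector \<circ> f)" "z \<in> path_image (yx_vector \<circ> g)"
  proof (rule fashoda_interlace[OF paths, of a c])
    show "path_image (yx_vector \<circ> f) \<subseteq> cbox a c" "path_image (yx_vector \<circ> g) \<subseteq> cbox a c"
      using box by (auto simp: path_image_compose)
  qed (use assms(4-) in \<open>simp_all add: pathstart_compose pathfinish_compose a_def\<close>)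
  then show ?thesis
    by (auto simp: path_image_compose yx_vector_inject)
qed

lemma closed_segment_vertical:
  fixes x a b :: real
  shows "r \<in> closed_segment (x, a) (x, b) \<Longrightarrow> fst r = x \<and> snd r \<in> closed_segment a b"
  by (cases r) (auto dest: closed_segment_PairD)

lemma closed_segment_horizontal:
  fixes y a b :: real
  shows "r \<in> closed_segment (a, y) (b, y) \<Longrightarrow> fst r \<in> closed_segment a b \<and> snd r = y"
  by (cases r) (auto dest: closed_segment_PairD)

lemma path_image_fst_ivt:
  fixes u :: "real \<Rightarrow> real \<times> real"
  assumes "path u" "a \<in> path_image u" "b \<in> path_image u" "fst a \<le> x" "x \<le> fst b"
  obtains r where "r \<in> path_image u" "fst r = x"
proof -
  have "z \<bullet> (1, 0) = fst z" for z :: "real \<times> real"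
    by (cases z) (simp add: inner_Pair)
  then show ?thesis
    using connected_ivt_component[OF connected_path_image[OF assms(1)] assms(2,3), of "(1, 0)" x]
      assms(4,5) that by auto
qed

lemma path_between_starts:
  fixes u v :: "real \<Rightarrow> 'a::real_normed_vector"
  assumes "path u" "path v" "z \<in> path_image u" "z \<in> path_image v"
  obtains h where "path h" "path_image h \<subseteq> path_image u \<union> path_image v"
    "pathstart h = pathstart u" "pathfinish h = pathstart v"
proof -
  obtain s where s: "s \<in> {0..1}" "u s = z" using assms(3) by (auto simp: path_image_def)
  obtain t where t: "t \<in> {0..1}" "v t = z" using assms(4) by (auto simp: path_image_def)
  let ?h = "subpath 0 s u +++ reversepath (subpath 0 t v)"
  show ?thesis
  proof
    show "path ?h"
      using assms s t by (auto simp: path_subpath pathfinish_subpath pathstart_subpath)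
    show "path_image ?h \<subseteq> path_image u \<union> path_image v"
      using s t path_image_subpath_subset[of 0 s u] path_image_subpath_subset[of 0 t v]
      by (auto simp: path_image_join pathfinish_subpath pathstart_subpath)
    show "pathstart ?h = pathstart u" "pathfinish ?h = pathstart v"
      by (simp_all add: pathfinish_subpath pathstart_subpath) (simp_all add: pathstart_def)
  qed
qed

lemma path_detour_to_axis:
  fixes u :: "real \<Rightarrow> real \<times> real"
  assumes "path u" "p \<in> path_image u"
  obtains h where "path h" "pathstart h = pathstart u" "pathfinish h = (0, y)"
    "path_image h \<subseteq> path_image u \<union> closed_segment p (fst p, y) \<union> closed_segment (fst p, y) (0, y)"
proof -
  obtain s where s: "s \<in> {0..1}" "u s = p" using assms(2) by (auto simp: path_image_def)
  let ?h = "subpath 0 s u +++ linepath p (fst p, y) +++ linepath (fst p, y) (0, y)"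
  show ?thesis
  proof
    show "path ?h"
      using assms s by (auto simp: path_subpath pathfinish_subpath pathstart_subpath)
    show "pathstart ?h = pathstart u" "pathfinish ?h = (0, y)"
      by (simp_all add: pathstart_subpath) (simp add: pathstart_def)
    show "path_image ?h \<subseteq> path_image u \<union> closed_segment p (fst p, y) \<union> closed_segment (fst p, y) (0, y)"
      using s path_image_subpath_subset[of 0 s u]
      by (auto simp: path_image_join pathfinish_subpath pathstart_subpath)
  qed
qed

lemma closed_segment_fst_nonneg:
  fixes a b :: "real \<times> real"
  assumes "0 \<le> fst a" "0 \<le> fst b"
  shows "closed_segment a b \<subseteq> {r. 0 \<le> fst r}"
proof
  fix r assume "r \<in> closed_segment a b"
  then show "r \<in> {r. 0 \<le> fst r}"
    using assms by (cases a, cases b, cases r)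
      (auto dest!: closed_segment_PairD simp: closed_segment_eq_real_ivl split: if_splits)
qed

lemma bounded_snd_less:
  fixes S :: "('a::real_normed_vector \<times> real) set"
  assumes "bounded S"
  obtains M where "\<And>r. r \<in> S \<Longrightarrow> \<bar>snd r\<bar> < M"
proof -
  obtain B where "\<And>r. r \<in> S \<Longrightarrow> norm r \<le> B"
    using assms by (auto simp: bounded_iff)
  then have "\<bar>snd r\<bar> < B + 1" if "r \<in> S" for r
    using norm_snd_le[of "snd r" "fst r"] that by fastforce
  then show ?thesis by (rule that)
qed

text \<open>Extend \<open>u\<close> vertically up from \<open>p\<close> and \<open>v\<close> down from \<open>q\<close> beyond both curves, then
  back to the axis: the endpoints of the two extended curves interlace on the axis.\<close>

lemma grounded_detours_meet:
  assumes gu: "grounded_at_start u" and gv: "grounded_at_start v"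
    and start_below: "snd (pathstart u) < snd (pathstart v)"
    and p: "p \<in> path_image u" and q: "q \<in> path_image v" and vertical: "fst q = fst p"
    and M: "\<And>r. r \<in> path_image u \<union> path_image v \<Longrightarrow> \<bar>snd r\<bar> < M"
  shows "(path_image u \<union> closed_segment p (fst p, M) \<union> closed_segment (fst p, M) (0, M)) \<inter>
    (path_image v \<union> closed_segment q (fst p, - M) \<union> closed_segment (fst p, - M) (0, - M)) \<noteq> {}"
proof -
  have paths: "path u" "path v" using gu gv by (simp_all add: grounded_at_start_def)
  obtain hu where hu: "path hu" "pathstart hu = pathstart u" "pathfinish hu = (0, M)"
    "path_image hu \<subseteq> path_image u \<union> closed_segment p (fst p, M) \<union> closed_segment (fst p, M) (0, M)"
    using path_detour_to_axis[OF paths(1) p] by metis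
  obtain hv where hv: "path hv" "pathstart hv = pathstart v" "pathfinish hv = (0, - M)"
    "path_image hv \<subseteq> path_image v \<union> closed_segment q (fst p, - M) \<union> closed_segment (fst p, - M) (0, - M)"
    using path_detour_to_axis[OF paths(2) q] vertical by metis
  have "0 \<le> fst p" "0 \<le> fst q" using gu gv p q by (simp_all add: grounded_at_start_def)
  have "path_image (reversepath hv) \<inter> path_image hu \<noteq> {}"
  proof (rule half_plane_interlaced_paths_meet)
    have "path_image u \<union> path_image v \<subseteq> {r. 0 \<le> fst r}"
      using gu gv by (auto simp: grounded_at_start_def)
    then show "path_image (reversepath hv) \<union> path_image hu \<subseteq> {r. 0 \<le> fst r}"
      using hu(4) hv(4) \<open>0 \<le> fst p\<close> \<open>0 \<le> fst q\<close>
        closed_segment_fst_nonneg[of p "(fst p, M)"] closed_segment_fst_nonneg[of "(fst p, M)" "(0, M)"]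
        closed_segment_fst_nonneg[of q "(fst p, - M)"]
        closed_segment_fst_nonneg[of "(fst p, - M)" "(0, - M)"]
      by auto
    show "fst (pathstart (reversepath hv)) = 0" "fst (pathfinish (reversepath hv)) = 0"
      "fst (pathstart hu) = 0" "fst (pathfinish hu) = 0"
      using hu hv gu gv by (simp_all add: grounded_at_start_def)
    have "\<bar>snd (pathstart u)\<bar> < M" "\<bar>snd (pathstart v)\<bar> < M"
      using M pathstart_in_path_image[of u] pathstart_in_path_image[of v] by blast+
    then show "snd (pathstart (reversepath hv)) < snd (pathstart hu)"
      "snd (pathstart hu) < snd (pathfinish (reversepath hv))"
      "snd (pathfinish (reversepath hv)) < snd (pathfinish hu)"
      using hu hv start_below by auto
  qed (use hu hv in simp_all)
  with hu(4) hv(4) show ?thesis by auto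
qed

lemma disjoint_x_monotone_grounded_below:
  assumes gu: "grounded_at_start u" and gv: "grounded_at_start v"
    and mu: "x_monotone u" and mv: "x_monotone v"
    and disjoint: "path_image u \<inter> path_image v = {}"
    and start_below: "snd (pathstart u) < snd (pathstart v)"
    and p: "p \<in> path_image u" and q: "q \<in> path_image v" and vertical: "fst q = fst p"
  shows "snd p < snd q"
proof (rule ccontr)
  assume "\<not> snd p < snd q"
  moreover have "p \<noteq> q" using p q disjoint by blast
  ultimately have q_below_p: "snd q < snd p"
    using vertical by (metis linorder_neqE_linordered_idom prod_eqI)
  have "bounded (path_image u \<union> path_image v)"
    using gu gv by (simp add: bounded_path_image grounded_at_start_def)
  then obtain M where M: "\<And>r. r \<in> path_image u \<union> path_image v \<Longrightarrow> \<bar>snd r\<bar> < M"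
    using bounded_snd_less by blast
  obtain r where
    r_u: "r \<in> path_image u \<union> closed_segment p (fst p, M) \<union> closed_segment (fst p, M) (0, M)" and
    r_v: "r \<in> path_image v \<union> closed_segment q (fst p, - M) \<union> closed_segment (fst p, - M) (0, - M)"
    using grounded_detours_meet[OF gu gv start_below p q vertical M] by blast
  have "\<bar>snd p\<bar> < M" "\<bar>snd q\<bar> < M" using M p q by blast+
  have up: "fst r' = fst p \<and> snd p \<le> snd r'" if "r' \<in> closed_segment p (fst p, M)" for r'
    using closed_segment_vertical[of r' "fst p" "snd p" M] that \<open>\<bar>snd p\<bar> < M\<close>
    by (simp add: closed_segment_eq_real_ivl abs_less_iff split: if_splits)
  have down: "fst r' = fst p \<and> snd r' \<le> snd q" if "r' \<in> closed_segment q (fst p, - M)" for r'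
  proof -
    have "r' \<in> closed_segment (fst p, snd q) (fst p, - M)"
      using that vertical by (metis prod.collapse)
    then show ?thesis
      using closed_segment_vertical[of r' "fst p" "snd q" "- M"] \<open>\<bar>snd q\<bar> < M\<close>
      by (simp add: closed_segment_eq_real_ivl abs_less_iff split: if_splits)
  qed
  have r_above: "r \<in> path_image u \<or> fst r = fst p \<and> snd p \<le> snd r \<or> snd r = M"
    using r_u up closed_segment_horizontal[of r "fst p" M 0] by blast
  have r_below: "r \<in> path_image v \<or> fst r = fst p \<and> snd r \<le> snd q \<or> snd r = - M"
    using r_v down closed_segment_horizontal[of r "fst p" "- M" 0] by blast
  have "r \<in> path_image u \<Longrightarrow> fst r = fst p \<Longrightarrow> r = p"
    using mu p by (simp add: x_monotone_def)
  moreover have "r \<in> path_image v \<Longrightarrow> fst r = fst p \<Longrightarrow> r = q"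
    using mv q vertical by (simp add: x_monotone_def)
  moreover have "r \<notin> path_image u \<inter> path_image v"
    using disjoint by blast
  ultimately show False
    using r_above r_below M[of r] \<open>\<bar>snd p\<bar> < M\<close> q_below_p
    by (elim disjE) (auto simp: abs_less_iff)
qed

lemma grounded_interlaced_pairs_meet:
  assumes "grounded_at_start a" "grounded_at_start b" "grounded_at_start c" "grounded_at_start d"
    and "path_image a \<inter> path_image c \<noteq> {}" "path_image b \<inter> path_image d \<noteq> {}"
    and "snd (pathstart a) < snd (pathstart b)" "snd (pathstart b) < snd (pathstart c)"
      "snd (pathstart c) < snd (pathstart d)"
  shows "(path_image a \<union> path_image c) \<inter> (path_image b \<union> path_image d) \<noteq> {}"
proof -
  have paths: "path a" "path b" "path c" "path d"
    using assms(1-4) by (simp_all add: grounded_at_start_def)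
  obtain f where f: "path f" "path_image f \<subseteq> path_image a \<union> path_image c"
    "pathstart f = pathstart a" "pathfinish f = pathstart c"
    using assms(5) path_between_starts[OF paths(1,3)] by blast
  obtain h where h: "path h" "path_image h \<subseteq> path_image b \<union> path_image d"
    "pathstart h = pathstart b" "pathfinish h = pathstart d"
    using assms(6) path_between_starts[OF paths(2,4)] by blast
  have "path_image f \<inter> path_image h \<noteq> {}"
    using f h assms(1-4,7-9)
    by (intro half_plane_interlaced_paths_meet) (auto simp: grounded_at_start_def)
  with f(2) h(2) show ?thesis by blast
qed

lemma x_monotone_grounded_interlaced_pairs_meet:
  assumes grounded: "grounded_at_start a" "grounded_at_start b" "grounded_at_start c"
      "grounded_at_start d"
    and monotone: "x_monotone a" "x_monotone b" "x_monotone c" "x_monotone d"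
    and "path_image a \<inter> path_image c \<noteq> {}" "path_image b \<inter> path_image d \<noteq> {}"
    and order: "snd (pathstart a) < snd (pathstart b)" "snd (pathstart b) < snd (pathstart c)"
      "snd (pathstart c) < snd (pathstart d)"
  shows "path_image a \<inter> path_image b \<noteq> {} \<or> path_image b \<inter> path_image c \<noteq> {} \<or>
    path_image c \<inter> path_image d \<noteq> {}"
proof (rule ccontr)
  assume "\<not> ?thesis"
  then have disjoint: "path_image a \<inter> path_image b = {}" "path_image b \<inter> path_image c = {}"
    "path_image c \<inter> path_image d = {}" by auto
  note below = disjoint_x_monotone_grounded_below
  obtain z where z: "z \<in> path_image a" "z \<in> path_image c" using assms(9) by blast
  obtain w where w: "w \<in> path_image b" "w \<in> path_image d" using assms(10) by blast
  have "path b" "path c" "fst (pathstart b) = 0" "fst (pathstart c) = 0" "0 \<le> fst z" "0 \<le> fst w"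
    using grounded z w by (auto simp: grounded_at_start_def)
  \<comment> \<open>Whichever of \<open>z, w\<close> is further right, the curve through the other one crosses its
    vertical line, and the ordering of disjoint monotone curves is violated there.\<close>
  show False
  proof (cases "fst w \<le> fst z")
    case True
    obtain r where r: "r \<in> path_image c" "fst r = fst w"
      using path_image_fst_ivt[OF \<open>path c\<close> pathstart_in_path_image z(2)] True
        \<open>fst (pathstart c) = 0\<close> \<open>0 \<le> fst w\<close> by metis
    have "snd w < snd r"
      using below[OF grounded(2,3) monotone(2,3) disjoint(2) order(2) w(1) r(1)] r by simp
    moreover have "snd r < snd w"
      using below[OF grounded(3,4) monotone(3,4) disjoint(3) order(3) r(1) w(2)] r by simp
    ultimately show False by simp
  next
    case False
    obtain r where r: "r \<in> path_image b" "fst r = fst z"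
      using path_image_fst_ivt[OF \<open>path b\<close> pathstart_in_path_image w(1)] False
        \<open>fst (pathstart b) = 0\<close> \<open>0 \<le> fst z\<close> by (metis nle_le)
    have "snd z < snd r"
      using below[OF grounded(1,2) monotone(1,2) disjoint(1) order(1) z(1) r(1)] r by simp
    moreover have "snd r < snd z"
      using below[OF grounded(2,3) monotone(2,3) disjoint(2) order(2) r(1) z(2)] r by simp
    ultimately show False by simp
  qed
qed

lemma contains_induced_ordered_end_orderE:
  assumes "contains_induced_ordered n H C (end_order g) E"
  obtains \<phi> where "\<And>i. i < n \<Longrightarrow> \<phi> i \<in> C"
    "\<And>i j. i < j \<Longrightarrow> j < n \<Longrightarrow> snd (pathstart (g (\<phi> i))) < snd (pathstart (g (\<phi> j)))"
    "\<And>i j. i < j \<Longrightarrow> j < n \<Longrightarrow> \<phi> i \<noteq> \<phi> j"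
    "\<And>i j. i < j \<Longrightarrow> j < n \<Longrightarrow> H i j \<longleftrightarrow> E (\<phi> i) (\<phi> j)"
proof -
  obtain \<phi> where in_C: "\<forall>i<n. \<phi> i \<in> C"
    and order: "\<forall>i<n. \<forall>j<n. i < j \<longrightarrow> end_order g (\<phi> i) (\<phi> j)"
    and edges: "\<forall>i<n. \<forall>j<n. i \<noteq> j \<longrightarrow> (H i j \<longleftrightarrow> E (\<phi> i) (\<phi> j))"
    using assms unfolding contains_induced_ordered_def by (elim exE conjE)
  have order': "snd (pathstart (g (\<phi> i))) < snd (pathstart (g (\<phi> j)))" if "i < j" "j < n" for i j
    using order that unfolding end_order_def by simp
  show ?thesis
  proof (rule that)
    show "\<phi> i \<in> C" if "i < n" for i
      using in_C that by blast
    show "\<phi> i \<noteq> \<phi> j" if "i < j" "j < n" for i j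
      using order'[OF that] by auto
    show "H i j \<longleftrightarrow> E (\<phi> i) (\<phi> j)" if "i < j" "j < n" for i j
      using edges that by simp
  qed (fact order')
qed

lemma grounded_not_contains_M1:
  assumes "\<And>a. a \<in> C \<Longrightarrow> grounded_at_start (g a)"
  shows "\<not> contains_induced_ordered 4 M1_edge C (end_order g) (int_graph g)"
proof
  assume "contains_induced_ordered 4 M1_edge C (end_order g) (int_graph g)"
  then obtain \<phi> where in_C: "\<And>i. i < 4 \<Longrightarrow> \<phi> i \<in> C"
    and order: "\<And>i j. i < j \<Longrightarrow> j < 4 \<Longrightarrow> snd (pathstart (g (\<phi> i))) < snd (pathstart (g (\<phi> j)))"
    and distinct: "\<And>i j. i < j \<Longrightarrow> j < 4 \<Longrightarrow> \<phi> i \<noteq> \<phi> j"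
    and edges: "\<And>i j. i < j \<Longrightarrow> j < 4 \<Longrightarrow> M1_edge i j \<longleftrightarrow> int_graph g (\<phi> i) (\<phi> j)"
    by (rule contains_induced_ordered_end_orderE) blast
  let ?c = "\<lambda>i. path_image (g (\<phi> i))"
  have meet: "M1_edge i j \<longleftrightarrow> ?c i \<inter> ?c j \<noteq> {}" if "i < j" "j < 4" for i j
    using edges[OF that] distinct[OF that] by (simp add: int_graph_def)
  have "(?c 0 \<union> ?c 2) \<inter> (?c 1 \<union> ?c 3) \<noteq> {}"
    using assms in_C meet[of 0 2] meet[of 1 3] order[of 0 1] order[of 1 2] order[of 2 3]
    by (intro grounded_interlaced_pairs_meet) (simp_all add: M1_edge_def)
  moreover have "?c 0 \<inter> ?c 1 = {}" "?c 0 \<inter> ?c 3 = {}" "?c 1 \<inter> ?c 2 = {}" "?c 2 \<inter> ?c 3 = {}"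
    using meet[of 0 1] meet[of 0 3] meet[of 1 2] meet[of 2 3] by (simp_all add: M1_edge_def doubleton_eq_iff)
  ultimately show False by blast
qed

lemma x_monotone_grounded_not_contains_co_P4:
  assumes "\<And>a. a \<in> C \<Longrightarrow> grounded_at_start (g a)" "\<And>a. a \<in> C \<Longrightarrow> x_monotone (g a)"
  shows "\<not> contains_induced_ordered 4 P4_edge C (end_order g) (co_int_graph g)"
proof
  assume "contains_induced_ordered 4 P4_edge C (end_order g) (co_int_graph g)"
  then obtain \<phi> where in_C: "\<And>i. i < 4 \<Longrightarrow> \<phi> i \<in> C"
    and order: "\<And>i j. i < j \<Longrightarrow> j < 4 \<Longrightarrow> snd (pathstart (g (\<phi> i))) < snd (pathstart (g (\<phi> j)))"
    and distinct: "\<And>i j. i < j \<Longrightarrow> j < 4 \<Longrightarrow> \<phi> i \<noteq> \<phi> j"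
    and edges: "\<And>i j. i < j \<Longrightarrow> j < 4 \<Longrightarrow> P4_edge i j \<longleftrightarrow> co_int_graph g (\<phi> i) (\<phi> j)"
    by (rule contains_induced_ordered_end_orderE) blast
  let ?c = "\<lambda>i. path_image (g (\<phi> i))"
  have disjoint: "P4_edge i j \<longleftrightarrow> ?c i \<inter> ?c j = {}" if "i < j" "j < 4" for i j
    using edges[OF that] distinct[OF that] by (simp add: co_int_graph_def)
  have "?c 0 \<inter> ?c 1 \<noteq> {} \<or> ?c 1 \<inter> ?c 2 \<noteq> {} \<or> ?c 2 \<inter> ?c 3 \<noteq> {}"
    using assms in_C disjoint[of 0 2] disjoint[of 1 3] order[of 0 1] order[of 1 2] order[of 2 3]
    by (intro x_monotone_grounded_interlaced_pairs_meet) (simp_all add: P4_edge_def)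
  then show False
    using disjoint[of 0 1] disjoint[of 1 2] disjoint[of 2 3] by (simp add: P4_edge_def)
qed

theorem lemma8:
  fixes C :: "'i set" and g :: "'i \<Rightarrow> real \<Rightarrow> real \<times> real"
  assumes grounded: "\<And>a. a \<in> C \<Longrightarrow> grounded_at_start (g a)"
    and distinct_ends: "\<And>a b. a \<in> C \<Longrightarrow> b \<in> C \<Longrightarrow> a \<noteq> b \<Longrightarrow>
            snd (pathstart (g a)) \<noteq> snd (pathstart (g b))"
  shows "\<not> contains_induced_ordered 4 M1_edge C (end_order g) (int_graph g) \<and>
         ((\<forall>a\<in>C. x_monotone (g a)) \<longrightarrow>
           \<not> contains_induced_ordered 4 P4_edge C (end_order g) (co_int_graph g))"
proof (intro conjI impI)
  show "\<not> contains_induced_ordered 4 M1_edge C (end_order g) (int_graph g)"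
    using grounded by (rule grounded_not_contains_M1)
next
  assume "\<forall>a\<in>C. x_monotone (g a)"
  then show "\<not> contains_induced_ordered 4 P4_edge C (end_order g) (co_int_graph g)"
    using grounded by (intro x_monotone_grounded_not_contains_co_P4) auto
qed

end
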